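(* The symmetric group of an infinite set $X$, with the topology of pointwise convergence (on $X$ discrete), fails topological bounded normal generation. The projective unitary group of an infinite-dimensional Hilbert space, with the (quotient of the) strong operator topology, fails topological bounded normal generation.
   Context: For $g$ in a group $G$, $g^{\pm G}=\{hgh^{-1}:h\in G\}\cup\{hg^{-1}h^{-1}:h\in G\}$; $A^{\cdot n}$ is the set of products of $n$ elements of $A$. A topological group $G$ has topological bounded normal generation if for every nontrivial $g\in G$ there is $n(g)\in\mathbb N$ with $\overline{(g^{\pm G})^{\cdot n(g)}}=G$. The projective unitary group of a Hilbert space $\mathcal H$ is $U(\mathcal H)/\mathbb S^1$. *)

theory Defs
  imports "HOL-Analysis.Analysis" "HOL-Algebra.Bij"
begin

definition conj_pm :: "('g, 'b) monoid_scheme \<Rightarrow> 'g \<Rightarrow> 'g set" where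
  "conj_pm G g =
     {h \<otimes>\<^bsub>G\<^esub> g \<otimes>\<^bsub>G\<^esub> inv\<^bsub>G\<^esub> h | h. h \<in> carrier G} \<union>
     {h \<otimes>\<^bsub>G\<^esub> inv\<^bsub>G\<^esub> g \<otimes>\<^bsub>G\<^esub> inv\<^bsub>G\<^esub> h | h. h \<in> carrier G}"

fun set_pow :: "('g, 'b) monoid_scheme \<Rightarrow> 'g set \<Rightarrow> nat \<Rightarrow> 'g set" where
  "set_pow G A 0 = {\<one>\<^bsub>G\<^esub>}"
| "set_pow G A (Suc n) = {a \<otimes>\<^bsub>G\<^esub> b | a b. a \<in> A \<and> b \<in> set_pow G A n}"

definition top_bounded_normal_generation :: "('g, 'b) monoid_scheme \<Rightarrow> 'g topology \<Rightarrow> bool" where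
  "top_bounded_normal_generation G T \<longleftrightarrow>
     (\<forall>g \<in> carrier G. g \<noteq> \<one>\<^bsub>G\<^esub> \<longrightarrow>
        (\<exists>n::nat. T closure_of (set_pow G (conj_pm G g) n) = carrier G))"

text \<open>The symmetric group of X is BijGroup X (extensional bijections of X);
  pointwise convergence with X discrete = subspace of the product of discrete copies of X.\<close>
definition pointwise_top :: "'a set \<Rightarrow> ('a \<Rightarrow> 'a) topology" where
  "pointwise_top X = subtopology (product_topology (\<lambda>_. discrete_topology X) X) (Bij X)"

text \<open>A complex Hilbert space is encoded as a real Hilbert space (type class real_inner +
  complete_space) together with an orthogonal complex structure J (multiplication by i).\<close>
definition complex_structure :: "('h::real_inner \<Rightarrow> 'h) \<Rightarrow> bool" where
  "complex_structure J \<longleftrightarrow> linear J \<and> (\<forall>x. J (J x) = - x) \<and> (\<forall>x y. inner (J x) (J y) = inner x y)"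

definition cscale :: "('h::real_inner \<Rightarrow> 'h) \<Rightarrow> complex \<Rightarrow> 'h \<Rightarrow> 'h" where
  "cscale J c x = Re c *\<^sub>R x + Im c *\<^sub>R J x"

text \<open>Complex inner product, linear in the first and conjugate-linear in the second argument.\<close>
definition cinner :: "('h::real_inner \<Rightarrow> 'h) \<Rightarrow> 'h \<Rightarrow> 'h \<Rightarrow> complex" where
  "cinner J x y = Complex (inner x y) (inner (J x) y)"

definition infinite_dimensional :: "'h::real_vector itself \<Rightarrow> bool" where
  "infinite_dimensional _ \<longleftrightarrow> \<not> (\<exists>B :: 'h set. finite B \<and> span B = UNIV)"

definition unitary_group :: "('h::real_inner \<Rightarrow> 'h) \<Rightarrow> ('h \<Rightarrow> 'h) set" where
  "unitary_group J = {U. bij U \<and> (\<forall>x y. U (x + y) = U x + U y)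
      \<and> (\<forall>c x. U (cscale J c x) = cscale J c (U x))
      \<and> (\<forall>x y. cinner J (U x) (U y) = cinner J x y)}"

definition SOT_unitary :: "('h::{real_inner,complete_space} \<Rightarrow> 'h) \<Rightarrow> ('h \<Rightarrow> 'h) topology" where
  "SOT_unitary J = subtopology (product_topology (\<lambda>_. euclidean) UNIV) (unitary_group J)"

definition pclass :: "('h::real_inner \<Rightarrow> 'h) \<Rightarrow> ('h \<Rightarrow> 'h) \<Rightarrow> ('h \<Rightarrow> 'h) set" where
  "pclass J U = {(\<lambda>x. cscale J c (U x)) | c. cmod c = 1}"

definition projective_unitary_group :: "('h::real_inner \<Rightarrow> 'h) \<Rightarrow> ('h \<Rightarrow> 'h) set monoid" where
  "projective_unitary_group J =
    \<lparr>carrier = pclass J ` unitary_group J,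
     mult = (\<lambda>A B. {f \<circ> g | f g. f \<in> A \<and> g \<in> B}),
     one = pclass J id\<rparr>"

definition quotient_topology :: "'a topology \<Rightarrow> ('a \<Rightarrow> 'b) \<Rightarrow> 'b topology" where
  "quotient_topology T q =
     topology (\<lambda>V. V \<subseteq> q ` topspace T \<and> openin T {x \<in> topspace T. q x \<in> V})"

end

theory Submission
  imports Defs
begin

(* Both groups carry a length l that is subadditive, bounded on the conjugates of some g \<noteq> 1 and
   of its inverse, and none of whose sublevel sets {l \<le> i} is dense. Products of n such conjugates
   then have length at most k n, so their closure is not the whole group.

   For Sym(X), l f is the number of points moved by f and g is a transposition; a permutation moving
   infinitely many points is kept away from {l \<le> i} by prescribing its values at i + 1 moved points.

   For PU(H), l [U] is the least number of vectors whose orthogonal complement is fixed pointwise by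
   a representative of [U], and g is the class of a complex reflection. Take a unitary V that is -1
   on m orthonormal vectors and +1 on m further ones, m > i. If [W] is near [V], then W is near c V on
   these vectors for some phase c; if moreover l [W] \<le> i, W fixes a unit vector in each of the two
   spans, which forces c to be close to both -1 and 1. *)

section \<open>Lengths and topological bounded normal generation\<close>

lemma set_pow_graded:
  fixes P :: "nat \<Rightarrow> 'g \<Rightarrow> bool"
  assumes one: "P 0 \<one>\<^bsub>G\<^esub>"
    and mult: "\<And>a b i j. P i a \<Longrightarrow> P j b \<Longrightarrow> P (i + j) (a \<otimes>\<^bsub>G\<^esub> b)"
    and gen: "\<And>c. c \<in> C \<Longrightarrow> P k c"
  shows "x \<in> set_pow G C n \<Longrightarrow> P (k * n) x"
proof (induction n arbitrary: x)
  case 0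
  then show ?case using one by simp
next
  case (Suc n)
  then obtain a b where "x = a \<otimes>\<^bsub>G\<^esub> b" "a \<in> C" "b \<in> set_pow G C n"
    by auto
  then show ?case using mult[OF gen Suc.IH] by simp
qed

lemma not_top_bounded_normal_generation_graded:
  fixes P :: "nat \<Rightarrow> 'g \<Rightarrow> bool"
  assumes g: "g \<in> carrier G" "g \<noteq> \<one>\<^bsub>G\<^esub>"
    and one: "P 0 \<one>\<^bsub>G\<^esub>"
    and mult: "\<And>a b i j. P i a \<Longrightarrow> P j b \<Longrightarrow> P (i + j) (a \<otimes>\<^bsub>G\<^esub> b)"
    and conj: "\<And>c. c \<in> conj_pm G g \<Longrightarrow> P k c"
    and far: "\<And>i. \<exists>x \<in> carrier G. x \<notin> T closure_of {a. P i a}"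
  shows "\<not> top_bounded_normal_generation G T"
proof
  assume "top_bounded_normal_generation G T"
  then obtain n where n: "T closure_of set_pow G (conj_pm G g) n = carrier G"
    using g unfolding top_bounded_normal_generation_def by blast
  obtain x where x: "x \<in> carrier G" "x \<notin> T closure_of {a. P (k * n) a}"
    using far by blast
  have "set_pow G (conj_pm G g) n \<subseteq> {a. P (k * n) a}"
    using set_pow_graded[of P G, OF one mult conj] by blast
  then have "T closure_of set_pow G (conj_pm G g) n \<subseteq> T closure_of {a. P (k * n) a}"
    by (rule closure_of_mono)
  with n x show False by blast
qed

lemma notin_closure_ofI:
  assumes "openin X U" "x \<in> U" "\<And>y. y \<in> U \<Longrightarrow> y \<notin> S"
  shows "x \<notin> X closure_of S"
  using assms unfolding in_closure_of by blast

section \<open>The symmetric group\<close>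

definition support :: "'a set \<Rightarrow> ('a \<Rightarrow> 'a) \<Rightarrow> 'a set" where
  "support X f = {x \<in> X. f x \<noteq> x}"

definition support_le :: "'a set \<Rightarrow> nat \<Rightarrow> ('a \<Rightarrow> 'a) \<Rightarrow> bool" where
  "support_le X k f \<longleftrightarrow> f \<in> Bij X \<and> finite (support X f) \<and> card (support X f) \<le> k"

lemma carrier_BijGroup [simp]: "carrier (BijGroup X) = Bij X"
  by (simp add: BijGroup_def)

lemma one_BijGroup [simp]: "\<one>\<^bsub>BijGroup X\<^esub> = (\<lambda>x\<in>X. x)"
  by (simp add: BijGroup_def)

lemma mult_BijGroup [simp]:
  "f \<in> Bij X \<Longrightarrow> g \<in> Bij X \<Longrightarrow> f \<otimes>\<^bsub>BijGroup X\<^esub> g = compose X f g"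
  by (simp add: BijGroup_def)

lemma Bij_apply: "f \<in> Bij X \<Longrightarrow> x \<in> X \<Longrightarrow> f x \<in> X"
  using Bij_imp_funcset by blast

lemma support_compose: "support X (compose X f g) \<subseteq> support X f \<union> support X g"
  by (auto simp: support_def compose_def)

lemma support_conj_BijGroup:
  assumes h: "h \<in> Bij X" and f: "f \<in> Bij X"
  shows "support X (h \<otimes>\<^bsub>BijGroup X\<^esub> f \<otimes>\<^bsub>BijGroup X\<^esub> inv\<^bsub>BijGroup X\<^esub> h) = h ` support X f"
proof -
  have bij: "bij_betw h X X" using h by (simp add: Bij_def)
  have hinv: "h (inv_into X h x) = x" "inv_into X h x \<in> X" if "x \<in> X" for x
    using that bij by (auto simp: bij_betw_inv_into_right bij_betw_def inv_into_into)
  have conj: "h \<otimes>\<^bsub>BijGroup X\<^esub> f \<otimes>\<^bsub>BijGroup X\<^esub> inv\<^bsub>BijGroup X\<^esub> h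
      = compose X (compose X h f) (\<lambda>x\<in>X. inv_into X h x)"
    using h f by (simp add: inv_BijGroup compose_Bij restrict_inv_into_Bij)
  show ?thesis unfolding conj
  proof (intro equalityI subsetI)
    fix x assume "x \<in> support X (compose X (compose X h f) (\<lambda>x\<in>X. inv_into X h x))"
    then have "x \<in> X" "inv_into X h x \<in> support X f"
      using hinv by (auto simp: support_def compose_def)
    then show "x \<in> h ` support X f"
      using hinv by (metis image_eqI)
  next
    fix x assume "x \<in> h ` support X f"
    then obtain y where y: "y \<in> X" "f y \<noteq> y" "x = h y"
      by (auto simp: support_def)
    then have "inv_into X h x = y"
      using bij by (simp add: bij_betw_def)
    moreover have "h (f y) \<noteq> h y"
      using y bij Bij_apply[OF f] by (metis bij_betw_inv_into_left)
    ultimately show "x \<in> support X (compose X (compose X h f) (\<lambda>x\<in>X. inv_into X h x))"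
      using y bij by (auto simp: support_def compose_def bij_betw_apply)
  qed
qed

lemma support_inv_BijGroup:
  assumes f: "f \<in> Bij X"
  shows "support X (inv\<^bsub>BijGroup X\<^esub> f) = support X f"
proof -
  have bij: "bij_betw f X X" using f by (simp add: Bij_def)
  have "inv_into X f x = x \<longleftrightarrow> f x = x" if "x \<in> X" for x
    using that bij by (metis bij_betw_inv_into_left bij_betw_inv_into_right)
  then show ?thesis
    using f by (auto simp: support_def inv_BijGroup)
qed

lemma support_le_one: "support_le X 0 \<one>\<^bsub>BijGroup X\<^esub>"
  by (simp add: support_le_def support_def id_Bij)

lemma support_le_mult:
  assumes "support_le X i f" "support_le X j g"
  shows "support_le X (i + j) (f \<otimes>\<^bsub>BijGroup X\<^esub> g)"
proof -
  have sub: "support X (compose X f g) \<subseteq> support X f \<union> support X g"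
    by (rule support_compose)
  have "card (support X (compose X f g)) \<le> card (support X f \<union> support X g)"
    using assms sub by (intro card_mono) (auto simp: support_le_def)
  also have "\<dots> \<le> i + j"
    using assms card_Un_le[of "support X f" "support X g"] by (simp add: support_le_def)
  finally show ?thesis
    using assms sub finite_subset by (auto simp: support_le_def compose_Bij)
qed

lemma support_le_conj_pm:
  assumes g: "support_le X k g" and c: "c \<in> conj_pm (BijGroup X) g"
  shows "support_le X k c"
proof -
  interpret group "BijGroup X" by (rule group_BijGroup)
  have gB: "g \<in> Bij X" using g by (simp add: support_le_def)
  obtain h g' where h: "h \<in> Bij X" and g': "g' \<in> Bij X" "support X g' = support X g"
    and c_eq: "c = h \<otimes>\<^bsub>BijGroup X\<^esub> g' \<otimes>\<^bsub>BijGroup X\<^esub> inv\<^bsub>BijGroup X\<^esub> h"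
    using c gB support_inv_BijGroup[OF gB] inv_closed[of g]
    unfolding conj_pm_def by auto
  have "support X c = h ` support X g"
    using c_eq g' support_conj_BijGroup[OF h g'(1)] by simp
  moreover have "c \<in> Bij X"
    using c_eq h g'(1) by (metis carrier_BijGroup m_closed inv_closed)
  ultimately show ?thesis
    using g card_image_le[of "support X g" h] by (auto simp: support_le_def)
qed

lemma topspace_pointwise_top [simp]: "topspace (pointwise_top X) = Bij X"
  unfolding pointwise_top_def
  using Bij_imp_extensional Bij_imp_funcset by (fastforce simp: PiE_iff)

lemma openin_pointwise_top_agree:
  assumes "finite F" "F \<subseteq> X" "f \<in> Bij X"
  shows "openin (pointwise_top X) {\<tau> \<in> Bij X. \<forall>x\<in>F. \<tau> x = f x}"
proof -
  have "openin (pointwise_top X) {\<tau> \<in> topspace (pointwise_top X). \<tau> x \<in> {f x}}" if "x \<in> F" for x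
  proof (rule openin_continuous_map_preimage)
    show "continuous_map (pointwise_top X) (discrete_topology X) (\<lambda>\<tau>. \<tau> x)"
      unfolding pointwise_top_def using that assms(2)
      by (intro continuous_map_from_subtopology continuous_map_product_projection) auto
    show "openin (discrete_topology X) {f x}"
      using that assms by (auto intro: Bij_apply)
  qed
  then have "openin (pointwise_top X) ((\<Inter>x\<in>F. {\<tau> \<in> topspace (pointwise_top X). \<tau> x \<in> {f x}}) \<inter> topspace (pointwise_top X))"
    using assms(1) by (intro openin_INT) auto
  moreover have "(\<Inter>x\<in>F. {\<tau> \<in> topspace (pointwise_top X). \<tau> x \<in> {f x}}) \<inter> topspace (pointwise_top X)
      = {\<tau> \<in> Bij X. \<forall>x\<in>F. \<tau> x = f x}"
    by auto
  ultimately show ?thesis by simp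
qed

lemma infinite_support_notin_closure:
  assumes f: "f \<in> Bij X" "infinite (support X f)"
  shows "f \<notin> pointwise_top X closure_of {a. support_le X k a}"
proof -
  obtain F where F: "F \<subseteq> support X f" "finite F" "card F = Suc k"
    using infinite_arbitrarily_large[OF f(2)] by blast
  define U where "U = {\<tau> \<in> Bij X. \<forall>x\<in>F. \<tau> x = f x}"
  have "openin (pointwise_top X) U"
    unfolding U_def using F f by (intro openin_pointwise_top_agree) (auto simp: support_def)
  moreover have "f \<in> U"
    using f by (simp add: U_def)
  moreover have "\<tau> \<notin> {a. support_le X k a}" if "\<tau> \<in> U" for \<tau>
  proof
    assume "\<tau> \<in> {a. support_le X k a}"
    then have "support_le X k \<tau>" by simp
    moreover have "F \<subseteq> support X \<tau>"
      using that F(1) by (auto simp: U_def support_def)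
    ultimately have "card F \<le> k"
      using card_mono[OF _ \<open>F \<subseteq> support X \<tau>\<close>] by (force simp: support_le_def)
    with F(3) show False by simp
  qed
  ultimately show ?thesis
    by (rule notin_closure_ofI)
qed

lemma restrict_involution_Bij:
  assumes "\<And>x. x \<in> X \<Longrightarrow> f x \<in> X" "\<And>x. x \<in> X \<Longrightarrow> f (f x) = x"
  shows "restrict f X \<in> Bij X"
proof -
  have "bij_betw (restrict f X) X X"
    by (rule bij_betw_byWitness[where f' = "restrict f X"]) (use assms in auto)
  then show ?thesis by (simp add: Bij_def)
qed

lemma infinite_support_Bij_exists:
  assumes "infinite X"
  obtains f where "f \<in> Bij X" "infinite (support X f)"
proof -
  obtain e :: "nat \<Rightarrow> 'a" where e: "inj e" "range e \<subseteq> X"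
    using infinite_countable_subset[OF assms] by blast
  define p where "p k = (if even k then Suc k else k - 1)" for k :: nat
  have p: "p (p k) = k" "p k \<noteq> k" for k
    unfolding p_def using odd_pos[of k] by auto
  define s where "s x = (if x \<in> range e then e (p (inv_into UNIV e x)) else x)" for x
  have s_e: "s (e k) = e (p k)" for k
    using e by (simp add: s_def)
  have "restrict s X \<in> Bij X"
    by (rule restrict_involution_Bij) (use e p in \<open>auto simp: s_def\<close>)
  moreover have "range e \<subseteq> support X (restrict s X)"
    using e p s_e by (auto simp: support_def inj_eq)
  then have "infinite (support X (restrict s X))"
    using e(1) finite_subset range_inj_infinite by blast
  ultimately show thesis by (rule that)
qed

lemma transposition_support_le:
  assumes "a \<in> X" "b \<in> X" "a \<noteq> b"
  shows "support_le X 2 (restrict (Transposition.transpose a b) X)"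
    and "restrict (Transposition.transpose a b) X \<noteq> \<one>\<^bsub>BijGroup X\<^esub>"
proof -
  have "support X (restrict (Transposition.transpose a b) X) = {a, b}"
    using assms by (auto simp: support_def Transposition.transpose_def)
  then show "support_le X 2 (restrict (Transposition.transpose a b) X)"
    using assms by (auto simp: support_le_def Transposition.transpose_def intro!: restrict_involution_Bij)
  show "restrict (Transposition.transpose a b) X \<noteq> \<one>\<^bsub>BijGroup X\<^esub>"
  proof
    assume "restrict (Transposition.transpose a b) X = \<one>\<^bsub>BijGroup X\<^esub>"
    then have "restrict (Transposition.transpose a b) X a = a"
      using assms(1) by simp
    with assms show False by simp
  qed
qed

theorem BijGroup_not_top_bounded_normal_generation:
  assumes "infinite X"
  shows "\<not> top_bounded_normal_generation (BijGroup X) (pointwise_top X)"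
proof -
  obtain a where a: "a \<in> X"
    using infinite_imp_nonempty[OF assms] by blast
  obtain b where "b \<in> X - {a}"
    using infinite_imp_nonempty[of "X - {a}"] assms by auto
  with a have ab: "a \<in> X" "b \<in> X" "a \<noteq> b"
    by auto
  obtain f where "f \<in> Bij X" "infinite (support X f)"
    using infinite_support_Bij_exists[OF assms] .
  then have far: "\<exists>x \<in> carrier (BijGroup X). x \<notin> pointwise_top X closure_of {a. support_le X i a}" for i
    using infinite_support_notin_closure by auto
  show ?thesis
    using transposition_support_le[OF ab]
    by (intro not_top_bounded_normal_generation_graded[where P = "support_le X", OF _ _ support_le_one
          support_le_mult support_le_conj_pm far]) (auto simp: support_le_def)
qed

section \<open>Inner product spaces\<close>

definition fixes_orthogonal :: "('a::real_inner \<Rightarrow> 'a) \<Rightarrow> 'a set \<Rightarrow> bool" where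
  "fixes_orthogonal W F \<longleftrightarrow> (\<forall>x. (\<forall>f\<in>F. inner x f = 0) \<longrightarrow> W x = x)"

lemma fixes_orthogonal_comp:
  "fixes_orthogonal A F \<Longrightarrow> fixes_orthogonal B G \<Longrightarrow> fixes_orthogonal (A \<circ> B) (F \<union> G)"
  by (simp add: fixes_orthogonal_def)

lemma fixes_orthogonal_inv:
  assumes "bij R" "fixes_orthogonal R F"
  shows "fixes_orthogonal (inv_into UNIV R) F"
  using assms unfolding fixes_orthogonal_def by (metis bij_is_inj inv_f_f)

lemma fixes_orthogonal_conj:
  assumes H: "bij H" "\<And>a b. inner (H a) (H b) = inner a b" and R: "fixes_orthogonal R F"
  shows "fixes_orthogonal (H \<circ> R \<circ> inv_into UNIV H) (H ` F)"
  unfolding fixes_orthogonal_def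
proof (intro allI impI)
  fix x assume x: "\<forall>f\<in>H ` F. inner x f = 0"
  have HH: "H (inv_into UNIV H x) = x"
    using H(1) by (simp add: bij_is_surj surj_f_inv_f)
  then have "\<forall>f\<in>F. inner (inv_into UNIV H x) f = 0"
    using x H(2)[of "inv_into UNIV H x"] by auto
  then have "R (inv_into UNIV H x) = inv_into UNIV H x"
    using R by (simp add: fixes_orthogonal_def)
  then show "(H \<circ> R \<circ> inv_into UNIV H) x = x"
    using HH by simp
qed

(* Otherwise x \<mapsto> (\<Sum>f\<in>F. inner x f *\<^sub>R f) is injective on span T and maps the independent
   set T into span F. *)
lemma exists_nonzero_orthogonal_in_span:
  fixes T F :: "'a::real_inner set"
  assumes T: "finite T" "independent T" and F: "finite F" "card F < card T"
  obtains x where "x \<in> span T" "x \<noteq> 0" "\<forall>f\<in>F. inner x f = 0"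
proof -
  define Q where "Q x = (\<Sum>f\<in>F. inner x f *\<^sub>R f)" for x
  have Q: "linear Q"
    by (rule linearI) (simp_all add: Q_def inner_add_left scaleR_add_left sum.distrib scaleR_sum_right)
  have Q_0: "\<forall>f\<in>F. inner x f = 0" if "Q x = 0" for x
  proof -
    have "(\<Sum>f\<in>F. (inner x f)\<^sup>2) = inner x (Q x)"
      by (simp add: Q_def inner_sum_right power2_eq_square)
    with that F(1) show ?thesis
      by (simp add: sum_nonneg_eq_0_iff)
  qed
  show thesis
  proof (rule ccontr)
    assume "\<not> thesis"
    then have no_x: "\<forall>f\<in>F. inner x f = 0 \<Longrightarrow> x \<in> span T \<Longrightarrow> x = 0" for x
      using that by blast
    have inj: "inj_on Q (span T)"
      by (rule linear_inj_on_iff_eq_0[OF Q subspace_span, THEN iffD2]) (use Q_0 no_x in blast)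
    have "Q ` T \<subseteq> span F"
      unfolding Q_def by (auto intro: span_sum span_scale span_base)
    then have "card (Q ` T) \<le> card F"
      using independent_span_bound[OF F(1) linear_independent_injective_image[OF Q T(2) inj]]
      by simp
    moreover have "card (Q ` T) = card T"
      using inj span_superset by (metis card_image inj_on_subset)
    ultimately show False
      using F(2) by simp
  qed
qed

lemma infinite_dimensional_independent:
  assumes "infinite_dimensional TYPE('a)"
  obtains T :: "'a::real_vector set" where "finite T" "independent T" "card T = k"
proof -
  have "\<exists>T :: 'a set. finite T \<and> independent T \<and> card T = k"
  proof (induction k)
    case 0
    show ?case by (intro exI[of _ "{}"]) (simp add: real_vector.independent_empty)
  next
    case (Suc k)
    then obtain T :: "'a set" where T: "finite T" "independent T" "card T = k"
      by blast
    then obtain y where y: "y \<notin> span T"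
      using assms by (auto simp: infinite_dimensional_def)
    then have "y \<notin> T"
      using span_base by blast
    with T y show ?case
      by (intro exI[of _ "insert y T"]) (simp add: independent_insert)
  qed
  then show thesis
    using that by blast
qed

definition orthonormal :: "'a::real_inner set \<Rightarrow> bool" where
  "orthonormal T \<longleftrightarrow> (\<forall>u\<in>T. norm u = 1) \<and> pairwise orthogonal T"

lemma orthonormal_independent: "orthonormal T \<Longrightarrow> independent T"
  unfolding orthonormal_def by (metis norm_zero pairwise_orthogonal_independent zero_neq_one)

lemma orthonormal_coordinate:
  assumes T: "finite T" "orthonormal T" and u: "u \<in> T"
  shows "inner (\<Sum>v\<in>T. a v *\<^sub>R v) u = a u"
proof -
  have "a v * inner v u = (if v = u then a u else 0)" if "v \<in> T" for v
    using T(2) u that by (auto simp: orthonormal_def pairwise_def orthogonal_def dot_square_norm)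
  then have "inner (\<Sum>v\<in>T. a v *\<^sub>R v) u = (\<Sum>v\<in>T. if v = u then a u else 0)"
    by (simp add: inner_sum_left cong: sum.cong)
  also have "\<dots> = a u"
    using T(1) u by simp
  finally show ?thesis .
qed

lemma exists_fixed_vector_near:
  assumes T: "finite T" "orthonormal T"
    and W: "linear W" "fixes_orthogonal W F" and F: "finite F" "card F < card T"
    and L: "linear L" and near: "\<forall>u\<in>T. norm (W u - L u) \<le> \<epsilon>"
  obtains x where "x \<noteq> 0" "norm (x - L x) \<le> real (card T) * \<epsilon> * norm x"
proof -
  obtain x where x: "x \<in> span T" "x \<noteq> 0" "\<forall>f\<in>F. inner x f = 0"
    using exists_nonzero_orthogonal_in_span[OF T(1) orthonormal_independent[OF T(2)] F] .
  obtain a where a: "x = (\<Sum>v\<in>T. a v *\<^sub>R v)"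
    using x(1) span_finite[OF T(1)] by auto
  have a_le: "\<bar>a v\<bar> \<le> norm x" if "v \<in> T" for v
    using Cauchy_Schwarz_ineq2[of x v] orthonormal_coordinate[OF T that, of a] T(2) that
    by (simp add: a orthonormal_def)
  have "x - L x = W x - L x"
    using W(2) x(3) by (simp add: fixes_orthogonal_def)
  also have "\<dots> = (\<Sum>v\<in>T. a v *\<^sub>R (W v - L v))"
    using W(1) L by (simp add: a linear_sum linear_scale sum_subtractf scaleR_diff_right)
  finally have "norm (x - L x) \<le> (\<Sum>v\<in>T. norm (a v *\<^sub>R (W v - L v)))"
    by (metis norm_sum)
  also have "\<dots> \<le> (\<Sum>v\<in>T. norm x * \<epsilon>)"
    using a_le near by (intro sum_mono) (simp add: mult_mono)
  finally show thesis
    using x(2) by (intro that) (simp_all add: mult_ac)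
qed

section \<open>The projective unitary group\<close>

lemma openin_quotient_topology:
  "openin (quotient_topology T q) V \<longleftrightarrow> V \<subseteq> q ` topspace T \<and> openin T {x \<in> topspace T. q x \<in> V}"
proof -
  have "istopology (\<lambda>V. V \<subseteq> q ` topspace T \<and> openin T {x \<in> topspace T. q x \<in> V})"
    unfolding istopology_def
  proof (rule conjI; intro allI impI)
    fix S S' assume "S \<subseteq> q ` topspace T \<and> openin T {x \<in> topspace T. q x \<in> S}"
      "S' \<subseteq> q ` topspace T \<and> openin T {x \<in> topspace T. q x \<in> S'}"
    moreover have "{x \<in> topspace T. q x \<in> S \<inter> S'} =
        {x \<in> topspace T. q x \<in> S} \<inter> {x \<in> topspace T. q x \<in> S'}"
      by blast
    ultimately show "S \<inter> S' \<subseteq> q ` topspace T \<and> openin T {x \<in> topspace T. q x \<in> S \<inter> S'}"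
      by auto
  next
    fix K assume K: "\<forall>S\<in>K. S \<subseteq> q ` topspace T \<and> openin T {x \<in> topspace T. q x \<in> S}"
    have "{x \<in> topspace T. q x \<in> \<Union>K} = (\<Union>S\<in>K. {x \<in> topspace T. q x \<in> S})"
      by blast
    with K show "\<Union>K \<subseteq> q ` topspace T \<and> openin T {x \<in> topspace T. q x \<in> \<Union>K}"
      by auto
  qed
  then show ?thesis
    by (simp add: quotient_topology_def)
qed

lemma openin_quotient_topology_image:
  assumes N: "openin T N" and saturated: "\<And>x y. x \<in> topspace T \<Longrightarrow> y \<in> N \<Longrightarrow> q x = q y \<Longrightarrow> x \<in> N"
  shows "openin (quotient_topology T q) (q ` N)"
proof -
  have "N \<subseteq> topspace T"
    using N by (rule openin_subset)
  moreover have "{x \<in> topspace T. q x \<in> q ` N} = N"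
    using saturated \<open>N \<subseteq> topspace T\<close> by blast
  ultimately show ?thesis
    using N by (auto simp: openin_quotient_topology)
qed

lemma openin_product_euclidean_near:
  fixes y :: "'a \<Rightarrow> 'b::metric_space"
  assumes "finite T"
  shows "openin (product_topology (\<lambda>_. euclidean) UNIV) {U. \<forall>u\<in>T. dist (U u) (y u) < r}"
proof -
  let ?P = "product_topology (\<lambda>_. euclidean) (UNIV :: 'a set) :: ('a \<Rightarrow> 'b) topology"
  have "openin ?P {U \<in> topspace ?P. U u \<in> ball (y u) r}" for u
    by (rule openin_continuous_map_preimage[OF continuous_map_product_projection]) auto
  then have "openin ?P ((\<Inter>u\<in>T. {U \<in> topspace ?P. U u \<in> ball (y u) r}) \<inter> topspace ?P)"
    using assms by (intro openin_INT) auto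
  moreover have "(\<Inter>u\<in>T. {U \<in> topspace ?P. U u \<in> ball (y u) r}) \<inter> topspace ?P
      = {U. \<forall>u\<in>T. dist (U u) (y u) < r}"
    by (auto simp: dist_commute)
  ultimately show ?thesis
    by simp
qed

locale complex_inner_space =
  fixes J :: "'h::real_inner \<Rightarrow> 'h"
  assumes complex_structure: "complex_structure J"
begin

lemma linear_J: "linear J"
  using complex_structure by (simp add: complex_structure_def)

lemma J_J [simp]: "J (J x) = - x"
  using complex_structure by (simp add: complex_structure_def)

lemma inner_J_J [simp]: "inner (J x) (J y) = inner x y"
  using complex_structure by (simp add: complex_structure_def)

lemmas J_add [simp] = linear_add[OF linear_J]
  and J_diff [simp] = linear_diff[OF linear_J]
  and J_minus [simp] = linear_neg[OF linear_J]
  and J_scaleR [simp] = linear_scale[OF linear_J]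

lemma inner_J_left: "inner (J x) y = - inner x (J y)"
  by (metis J_J inner_J_J inner_minus_left)

lemma inner_J_self [simp]: "inner x (J x) = 0" "inner (J x) x = 0"
  using inner_J_left[of x x] by (simp_all add: inner_commute)

lemma linear_cscale: "linear (cscale J c)"
  by (rule linearI) (simp_all add: cscale_def algebra_simps)

lemma cscale_one [simp]: "cscale J 1 x = x"
  by (simp add: cscale_def)

lemma cscale_cscale: "cscale J c (cscale J d x) = cscale J (c * d) x"
  by (simp add: cscale_def algebra_simps)

lemma cscale_add_left: "cscale J (a + b) x = cscale J a x + cscale J b x"
  by (simp add: cscale_def algebra_simps)

lemma cscale_diff_left: "cscale J (a - b) x = cscale J a x - cscale J b x"
  by (simp add: cscale_def algebra_simps)

lemma J_cscale: "J (cscale J c x) = cscale J c (J x)"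
  by (simp add: cscale_def algebra_simps)

lemma inner_cscale: "inner (cscale J c x) (cscale J c y) = (cmod c)\<^sup>2 * inner x y"
proof -
  have "inner (cscale J c x) (cscale J c y)
      = (Re c)\<^sup>2 * inner x y + Re c * Im c * (inner x (J y) + inner (J x) y)
        + (Im c)\<^sup>2 * inner (J x) (J y)"
    by (simp add: cscale_def inner_add_left inner_add_right algebra_simps power2_eq_square)
  also have "\<dots> = ((Re c)\<^sup>2 + (Im c)\<^sup>2) * inner x y"
    by (simp add: inner_J_left algebra_simps)
  finally show ?thesis
    by (simp add: cmod_def)
qed

lemma norm_cscale: "norm (cscale J c x) = cmod c * norm x"
proof -
  have "(norm (cscale J c x))\<^sup>2 = (cmod c * norm x)\<^sup>2"
    by (simp add: power2_norm_eq_inner inner_cscale power_mult_distrib)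
  then show ?thesis
    by (simp add: power2_eq_iff_nonneg)
qed

lemma cscale_eq_0_iff: "cscale J c x = 0 \<longleftrightarrow> c = 0 \<or> x = 0"
  using norm_cscale[of c x] by (metis mult_eq_0_iff norm_eq_zero)

lemma unitary_group_iff:
  "U \<in> unitary_group J \<longleftrightarrow>
     bij U \<and> linear U \<and> (\<forall>x. U (J x) = J (U x)) \<and> (\<forall>x y. inner (U x) (U y) = inner x y)"
proof
  assume U: "U \<in> unitary_group J"
  then have cscale_U: "U (cscale J c x) = cscale J c (U x)" for c x
    by (simp add: unitary_group_def)
  have "linear U"
  proof (rule linearI)
    show "U (x + y) = U x + U y" for x y
      using U by (simp add: unitary_group_def)
    show "U (r *\<^sub>R x) = r *\<^sub>R U x" for r x
      using cscale_U[of "complex_of_real r" x] by (simp add: cscale_def)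
  qed
  moreover have "U (J x) = J (U x)" for x
    using cscale_U[of \<i> x] by (simp add: cscale_def)
  moreover have "inner (U x) (U y) = inner x y" for x y
    using U by (simp add: unitary_group_def cinner_def)
  ultimately show "bij U \<and> linear U \<and> (\<forall>x. U (J x) = J (U x)) \<and> (\<forall>x y. inner (U x) (U y) = inner x y)"
    using U by (simp add: unitary_group_def)
next
  assume U: "bij U \<and> linear U \<and> (\<forall>x. U (J x) = J (U x)) \<and> (\<forall>x y. inner (U x) (U y) = inner x y)"
  then have "U (cscale J c x) = cscale J c (U x)" for c x
    by (simp add: cscale_def linear_add linear_scale)
  moreover have "cinner J (U x) (U y) = cinner J x y" for x y
    using U by (metis cinner_def)
  ultimately show "U \<in> unitary_group J"
    using U by (simp add: unitary_group_def linear_add)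
qed

lemma id_unitary: "id \<in> unitary_group J"
  by (simp add: unitary_group_iff linear_id)

lemma comp_unitary: "U \<in> unitary_group J \<Longrightarrow> W \<in> unitary_group J \<Longrightarrow> U \<circ> W \<in> unitary_group J"
  by (simp add: unitary_group_iff bij_comp linear_compose)

lemma inv_unitary:
  assumes "U \<in> unitary_group J"
  shows "inv_into UNIV U \<in> unitary_group J"
proof -
  have U: "bij U" "linear U" "\<And>x. U (J x) = J (U x)" "\<And>x y. inner (U x) (U y) = inner x y"
    using assms by (auto simp: unitary_group_iff)
  have UU: "U (inv_into UNIV U x) = x" for x
    using U(1) by (simp add: bij_is_surj surj_f_inv_f)
  have inv_eq: "inv_into UNIV U a = b \<longleftrightarrow> a = U b" for a b
    using U(1) UU by (metis bij_inv_eq_iff)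
  have "linear (inv_into UNIV U)"
    by (rule linearI) (use inv_eq UU U(2) in \<open>simp_all add: linear_add linear_scale\<close>)
  moreover have "inv_into UNIV U (J x) = J (inv_into UNIV U x)" for x
    using inv_eq U(3) UU by simp
  moreover have "inner (inv_into UNIV U x) (inv_into UNIV U y) = inner x y" for x y
    using U(4)[of "inv_into UNIV U x" "inv_into UNIV U y"] UU by simp
  ultimately show ?thesis
    using U(1) by (simp add: unitary_group_iff bij_imp_bij_inv)
qed

lemma inv_comp_unitary: "U \<in> unitary_group J \<Longrightarrow> inv_into UNIV U \<circ> U = id"
  unfolding unitary_group_def by (simp add: bij_is_inj inv_o_cancel)

lemma cscale_unitary:
  assumes "cmod d = 1"
  shows "cscale J d \<in> unitary_group J"
proof -
  have "cnj d * d = 1"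
    using assms complex_norm_square[of d] by (simp add: mult.commute)
  then have "cscale J (cnj d) (cscale J d x) = x" "cscale J d (cscale J (cnj d) x) = x" for x
    by (simp_all add: cscale_cscale mult.commute)
  then have "bij (cscale J d)"
    by (intro bij_betw_byWitness[where f' = "cscale J (cnj d)"]) auto
  then show ?thesis
    using assms by (simp add: unitary_group_iff linear_cscale J_cscale inner_cscale)
qed

lemma unitary_cscale:
  "U \<in> unitary_group J \<Longrightarrow> U (cscale J c x) = cscale J c (U x)"
  by (simp add: unitary_group_def)

lemma pclass_self: "U \<in> pclass J U"
  unfolding pclass_def by (intro CollectI exI[of _ 1]) simp

lemma pclass_eqD:
  assumes "pclass J U = pclass J U'"
  obtains c where "cmod c = 1" "U = (\<lambda>x. cscale J c (U' x))"
proof -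
  have "U \<in> pclass J U'"
    using pclass_self[of U] assms by simp
  then show thesis
    unfolding pclass_def mem_Collect_eq by (elim exE conjE) (rule that)
qed

lemma pclass_comp:
  assumes U: "U \<in> unitary_group J"
  shows "{f \<circ> g | f g. f \<in> pclass J U \<and> g \<in> pclass J W} = pclass J (U \<circ> W)"
proof (intro equalityI subsetI)
  fix h assume "h \<in> {f \<circ> g | f g. f \<in> pclass J U \<and> g \<in> pclass J W}"
  then obtain c d where cd: "cmod c = 1" "cmod d = 1"
    and h: "h = (\<lambda>x. cscale J c (U x)) \<circ> (\<lambda>x. cscale J d (W x))"
    by (auto simp: pclass_def)
  have "h = (\<lambda>x. cscale J (c * d) ((U \<circ> W) x))"
    using h by (auto simp: unitary_cscale[OF U] cscale_cscale)
  moreover have "cmod (c * d) = 1"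
    using cd by (simp add: norm_mult)
  ultimately show "h \<in> pclass J (U \<circ> W)"
    by (auto simp: pclass_def)
next
  fix h assume "h \<in> pclass J (U \<circ> W)"
  then obtain c where c: "cmod c = 1" "h = (\<lambda>x. cscale J c ((U \<circ> W) x))"
    by (auto simp: pclass_def)
  define f where "f = (\<lambda>x. cscale J c (U x))"
  have "h = f \<circ> W"
    using c(2) by (auto simp: f_def)
  moreover have "f \<in> pclass J U"
    using c(1) unfolding pclass_def f_def by blast
  ultimately show "h \<in> {f \<circ> g | f g. f \<in> pclass J U \<and> g \<in> pclass J W}"
    using pclass_self[of W] by (intro CollectI exI[of _ f] exI[of _ W] conjI)
qed

lemma carrier_projective_unitary_group [simp]:
  "carrier (projective_unitary_group J) = pclass J ` unitary_group J"
  by (simp add: projective_unitary_group_def)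

lemma one_projective_unitary_group [simp]: "\<one>\<^bsub>projective_unitary_group J\<^esub> = pclass J id"
  by (simp add: projective_unitary_group_def)

lemma mult_projective_unitary_group [simp]:
  "U \<in> unitary_group J \<Longrightarrow>
    pclass J U \<otimes>\<^bsub>projective_unitary_group J\<^esub> pclass J W = pclass J (U \<circ> W)"
  by (simp add: projective_unitary_group_def pclass_comp)

lemma group_projective_unitary_group: "group (projective_unitary_group J)"
proof (rule groupI)
  fix x y z
  assume "x \<in> carrier (projective_unitary_group J)" "y \<in> carrier (projective_unitary_group J)"
    "z \<in> carrier (projective_unitary_group J)"
  then obtain U V W where UVW: "U \<in> unitary_group J" "V \<in> unitary_group J" "W \<in> unitary_group J"
    and xyz: "x = pclass J U" "y = pclass J V" "z = pclass J W"
    by auto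
  show "x \<otimes>\<^bsub>projective_unitary_group J\<^esub> y \<in> carrier (projective_unitary_group J)"
    unfolding xyz using UVW by (simp add: comp_unitary)
  show "x \<otimes>\<^bsub>projective_unitary_group J\<^esub> y \<otimes>\<^bsub>projective_unitary_group J\<^esub> z =
      x \<otimes>\<^bsub>projective_unitary_group J\<^esub> (y \<otimes>\<^bsub>projective_unitary_group J\<^esub> z)"
    unfolding xyz using UVW by (simp add: comp_unitary o_assoc)
next
  fix x assume "x \<in> carrier (projective_unitary_group J)"
  then obtain U where U: "U \<in> unitary_group J" and x: "x = pclass J U"
    by auto
  show "\<one>\<^bsub>projective_unitary_group J\<^esub> \<otimes>\<^bsub>projective_unitary_group J\<^esub> x = x"
    unfolding x using id_unitary by simp
  have "pclass J (inv_into UNIV U) \<otimes>\<^bsub>projective_unitary_group J\<^esub> x = \<one>\<^bsub>projective_unitary_group J\<^esub>"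
    unfolding x using U by (simp add: inv_unitary inv_comp_unitary)
  moreover have "pclass J (inv_into UNIV U) \<in> carrier (projective_unitary_group J)"
    using U inv_unitary by simp
  ultimately show "\<exists>y\<in>carrier (projective_unitary_group J).
      y \<otimes>\<^bsub>projective_unitary_group J\<^esub> x = \<one>\<^bsub>projective_unitary_group J\<^esub>"
    by blast
qed (use id_unitary in simp)

lemma inv_projective_unitary_group:
  assumes U: "U \<in> unitary_group J"
  shows "inv\<^bsub>projective_unitary_group J\<^esub> (pclass J U) = pclass J (inv_into UNIV U)"
proof (rule group.inv_equality[OF group_projective_unitary_group])
  show "pclass J (inv_into UNIV U) \<otimes>\<^bsub>projective_unitary_group J\<^esub> pclass J U =
      \<one>\<^bsub>projective_unitary_group J\<^esub>"
    using U by (simp add: inv_unitary inv_comp_unitary)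
qed (use U inv_unitary in auto)


definition class_support_le :: "nat \<Rightarrow> ('h \<Rightarrow> 'h) set \<Rightarrow> bool" where
  "class_support_le k A \<longleftrightarrow>
     (\<exists>W F. W \<in> unitary_group J \<and> A = pclass J W \<and> finite F \<and> card F \<le> k \<and> fixes_orthogonal W F)"

lemma class_support_le_one: "class_support_le 0 \<one>\<^bsub>projective_unitary_group J\<^esub>"
  unfolding class_support_le_def using id_unitary
  by (intro exI[of _ id] exI[of _ "{}"]) (simp add: fixes_orthogonal_def)

lemma class_support_le_mult:
  assumes "class_support_le i A" "class_support_le j B"
  shows "class_support_le (i + j) (A \<otimes>\<^bsub>projective_unitary_group J\<^esub> B)"
proof -
  obtain U F V G where "U \<in> unitary_group J" "A = pclass J U" "finite F" "card F \<le> i" "fixes_orthogonal U F"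
    "V \<in> unitary_group J" "B = pclass J V" "finite G" "card G \<le> j" "fixes_orthogonal V G"
    using assms unfolding class_support_le_def by blast
  then show ?thesis
    unfolding class_support_le_def using card_Un_le[of F G]
    by (intro exI[of _ "U \<circ> V"] exI[of _ "F \<union> G"]) (auto simp: comp_unitary fixes_orthogonal_comp)
qed

lemma class_support_le_conj_pm:
  assumes R: "R \<in> unitary_group J" "fixes_orthogonal R F" "finite F" "card F \<le> k"
    and c: "c \<in> conj_pm (projective_unitary_group J) (pclass J R)"
  shows "class_support_le k c"
proof -
  let ?G = "projective_unitary_group J"
  obtain R' H where R': "R' \<in> unitary_group J" "fixes_orthogonal R' F"
    and H: "H \<in> unitary_group J" and c_eq: "c = pclass J H \<otimes>\<^bsub>?G\<^esub> pclass J R' \<otimes>\<^bsub>?G\<^esub> inv\<^bsub>?G\<^esub> pclass J H"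
  proof -
    have "bij R"
      using R(1) by (simp add: unitary_group_def)
    then have "fixes_orthogonal (inv_into UNIV R) F"
      using R(2) by (rule fixes_orthogonal_inv)
    then show thesis
      using c R inv_unitary[OF R(1)] that
      unfolding conj_pm_def by (auto simp: inv_projective_unitary_group)
  qed
  have H': "bij H" "\<And>a b. inner (H a) (H b) = inner a b" "inv_into UNIV H \<in> unitary_group J"
    using H inv_unitary[OF H] by (auto simp: unitary_group_iff)
  have "c = pclass J (H \<circ> R' \<circ> inv_into UNIV H)"
    using c_eq H R' H' by (simp add: inv_projective_unitary_group comp_unitary)
  moreover have "fixes_orthogonal (H \<circ> R' \<circ> inv_into UNIV H) (H ` F)"
    using fixes_orthogonal_conj[OF H'(1,2) R'(2)] .
  ultimately show ?thesis
    unfolding class_support_le_def using H R' H' R(3,4) card_image_le[OF R(3), of H]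
    by (intro exI[of _ "H \<circ> R' \<circ> inv_into UNIV H"] exI[of _ "H ` F"]) (auto simp: comp_unitary)
qed

(* inner u v = 0 \<and> inner u (J v) = 0 says cinner J u v = 0. *)
definition complex_orthonormal :: "'h set \<Rightarrow> bool" where
  "complex_orthonormal E \<longleftrightarrow> (\<forall>u\<in>E. norm u = 1) \<and>
     (\<forall>u\<in>E. \<forall>v\<in>E. u \<noteq> v \<longrightarrow> inner u v = 0 \<and> inner u (J v) = 0)"

lemma complex_orthonormal_subset:
  "complex_orthonormal E \<Longrightarrow> T \<subseteq> E \<Longrightarrow> complex_orthonormal T"
  by (auto simp: complex_orthonormal_def)

lemma complex_orthonormal_orthonormal: "complex_orthonormal E \<Longrightarrow> orthonormal E"
  by (auto simp: complex_orthonormal_def orthonormal_def pairwise_def orthogonal_def)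

lemma complex_orthonormal_exists:
  assumes "infinite_dimensional TYPE('h)"
  obtains E where "finite E" "complex_orthonormal E" "card E = k"
proof -
  have "\<exists>E. finite E \<and> complex_orthonormal E \<and> card E = k"
  proof (induction k)
    case 0
    show ?case by (intro exI[of _ "{}"]) (simp add: complex_orthonormal_def)
  next
    case (Suc k)
    then obtain E where E: "finite E" "complex_orthonormal E" "card E = k"
      by blast
    obtain T :: "'h set" where T: "finite T" "independent T" "card T = Suc (2 * k)"
      using infinite_dimensional_independent[OF assms] .
    have "card (E \<union> J ` E) < card T"
      using card_Un_le[of E "J ` E"] card_image_le[OF E(1), of J] E(3) T(3) by simp
    then obtain x where x: "x \<noteq> 0" "\<forall>f\<in>E \<union> J ` E. inner x f = 0"
      using exists_nonzero_orthogonal_in_span[OF T(1,2)] E(1) by (metis finite_UnI finite_imageI)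
    define y where "y = x /\<^sub>R norm x"
    have y: "norm y = 1" "\<forall>u\<in>E. inner y u = 0 \<and> inner y (J u) = 0"
      using x by (auto simp: y_def)
    have "y \<notin> E"
    proof
      assume "y \<in> E"
      then have "inner y y = 0"
        using y(2) by blast
      with y(1) show False
        by simp
    qed
    moreover have "inner u y = 0 \<and> inner u (J y) = 0" if "u \<in> E" for u
      using y(2) that inner_J_left[of u y] by (simp add: inner_commute)
    ultimately have "complex_orthonormal (insert y E)"
      using E(2) y unfolding complex_orthonormal_def by auto
    with E \<open>y \<notin> E\<close> show ?case
      by (intro exI[of _ "insert y E"]) simp
  qed
  then show thesis
    using that by blast
qed

definition reflection :: "'h \<Rightarrow> 'h \<Rightarrow> 'h" where
  "reflection v x = x - 2 *\<^sub>R (inner x v *\<^sub>R v + inner x (J v) *\<^sub>R J v)"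

lemma reflection_orthogonal: "inner x v = 0 \<Longrightarrow> inner x (J v) = 0 \<Longrightarrow> reflection v x = x"
  by (simp add: reflection_def)

lemma fixes_orthogonal_reflection: "fixes_orthogonal (reflection v) {v, J v}"
  by (simp add: fixes_orthogonal_def reflection_orthogonal)

lemma reflection_self: "norm v = 1 \<Longrightarrow> reflection v v = - v"
  by (simp add: reflection_def dot_square_norm algebra_simps flip: scaleR_2)

lemma reflection_unitary:
  assumes v: "norm v = 1"
  shows "reflection v \<in> unitary_group J"
proof -
  have vv: "inner v v = 1"
    using v by (simp add: dot_square_norm)
  have refl_v: "inner (reflection v x) v = - inner x v" "inner (reflection v x) (J v) = - inner x (J v)" for x
    by (simp_all add: reflection_def inner_diff_left inner_add_left vv)
  have "reflection v (reflection v x) = x" for x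
    by (subst (1) reflection_def) (simp add: refl_v reflection_def vv algebra_simps)
  then have "bij (reflection v)"
    by (intro bij_betw_byWitness[where f' = "reflection v"]) auto
  moreover have "linear (reflection v)"
    by (rule linearI) (simp_all add: reflection_def inner_add_left algebra_simps)
  moreover have "reflection v (J x) = J (reflection v x)" for x
    by (simp add: reflection_def inner_J_left algebra_simps)
  moreover have "inner (reflection v x) (reflection v y) = inner x y" for x y
  proof -
    have "inner (reflection v x) (reflection v y)
        = inner (reflection v x) y + 2 * (inner y v * inner x v + inner y (J v) * inner x (J v))"
      by (simp add: reflection_def[of v y] inner_diff_right inner_add_right refl_v)
    also have "inner (reflection v x) y = inner x y - 2 * (inner x v * inner v y + inner x (J v) * inner (J v) y)"
      by (simp add: reflection_def inner_diff_left inner_add_left)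
    finally show ?thesis
      by (simp add: inner_commute algebra_simps)
  qed
  ultimately show ?thesis
    by (simp add: unitary_group_iff)
qed


lemma pclass_reflection_ne_one:
  assumes v: "norm v = 1" and w: "w \<noteq> 0" "inner w v = 0" "inner w (J v) = 0"
  shows "pclass J (reflection v) \<noteq> pclass J id"
proof
  assume "pclass J (reflection v) = pclass J id"
  then obtain c where c: "reflection v = (\<lambda>x. cscale J c (id x))"
    by (rule pclass_eqD)
  have "cscale J (c + 1) v = 0"
    using c reflection_self[OF v] by (simp add: cscale_add_left fun_eq_iff)
  then have "c + 1 = 0"
    using v by (auto simp: cscale_eq_0_iff)
  have "cscale J (c - 1) w = 0"
    using c reflection_orthogonal[OF w(2,3)] by (simp add: cscale_diff_left fun_eq_iff)
  then have "c = 1"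
    using w(1) by (simp add: cscale_eq_0_iff)
  with \<open>c + 1 = 0\<close> show False
    by simp
qed

lemma exists_unitary_neg_on:
  assumes "finite T" "complex_orthonormal T"
  obtains V where "V \<in> unitary_group J" "\<forall>u\<in>T. V u = - u"
    "\<forall>x. (\<forall>u\<in>T. inner x u = 0 \<and> inner x (J u) = 0) \<longrightarrow> V x = x"
proof -
  have "\<exists>V \<in> unitary_group J. (\<forall>u\<in>T. V u = - u) \<and>
      (\<forall>x. (\<forall>u\<in>T. inner x u = 0 \<and> inner x (J u) = 0) \<longrightarrow> V x = x)"
    using assms
  proof (induction T rule: finite_induct)
    case empty
    show ?case using id_unitary by (intro bexI[of _ id]) auto
  next
    case (insert u T)
    then obtain V where V: "V \<in> unitary_group J" "\<forall>t\<in>T. V t = - t"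
      "\<forall>x. (\<forall>t\<in>T. inner x t = 0 \<and> inner x (J t) = 0) \<longrightarrow> V x = x"
      using complex_orthonormal_subset by blast
    have u: "norm u = 1"
      using insert.prems by (simp add: complex_orthonormal_def)
    have orth: "inner t u = 0 \<and> inner t (J u) = 0 \<and> inner u t = 0 \<and> inner u (J t) = 0" if "t \<in> T" for t
      using insert.prems insert.hyps(2) that unfolding complex_orthonormal_def by (metis insertCI)
    show ?case
    proof (intro bexI conjI ballI allI impI)
      show "reflection u \<circ> V \<in> unitary_group J"
        using comp_unitary[OF reflection_unitary[OF u] V(1)] .
      show "(reflection u \<circ> V) t = - t" if "t \<in> insert u T" for t
      proof (cases "t = u")
        case True
        then show ?thesis
          using V(3) orth reflection_self[OF u] by simp
      next
        case False
        then show ?thesis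
          using that V(2) orth reflection_orthogonal[of "- t" u] by simp
      qed
      show "(reflection u \<circ> V) x = x" if "\<forall>t\<in>insert u T. inner x t = 0 \<and> inner x (J t) = 0" for x
        using that V(3) reflection_orthogonal[of x u] by simp
    qed
  qed
  then show thesis
    using that by blast
qed

lemma dist_cscale: "cmod d = 1 \<Longrightarrow> dist (cscale J d a) (cscale J d b) = dist a b"
  using norm_cscale[of d "a - b"] linear_diff[OF linear_cscale, of d a b] by (simp add: dist_norm)

lemma phase_close_to_one:
  assumes T: "finite T" "orthonormal T"
    and W: "W \<in> unitary_group J" "fixes_orthogonal W F" and F: "finite F" "card F < card T"
    and near: "\<forall>u\<in>T. norm (W u - cscale J s u) \<le> \<epsilon>"
  shows "cmod (1 - s) \<le> real (card T) * \<epsilon>"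
proof -
  have "linear W"
    using W(1) by (simp add: unitary_group_iff)
  then obtain x where x: "x \<noteq> 0" "norm (x - cscale J s x) \<le> real (card T) * \<epsilon> * norm x"
    using exists_fixed_vector_near[OF T _ W(2) F linear_cscale near] by blast
  have "x - cscale J s x = cscale J (1 - s) x"
    by (simp add: cscale_diff_left)
  then have "cmod (1 - s) * norm x \<le> real (card T) * \<epsilon> * norm x"
    using x(2) by (simp add: norm_cscale)
  then show ?thesis
    using x(1) by simp
qed

end

locale complex_hilbert_space = complex_inner_space J for J :: "'h::{real_inner,complete_space} \<Rightarrow> 'h"
begin

lemma openin_SOT_unitary_near:
  assumes "finite T"
  shows "openin (SOT_unitary J)
    {U \<in> unitary_group J. \<exists>c. cmod c = 1 \<and> (\<forall>u\<in>T. dist (U u) (cscale J c (V u)) < \<epsilon>)}"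
proof -
  let ?P = "product_topology (\<lambda>_. euclidean) (UNIV :: 'h set) :: ('h \<Rightarrow> 'h) topology"
  have "openin ?P {U. \<forall>u\<in>T. dist (U u) (cscale J c (V u)) < \<epsilon>}" for c
    using assms by (rule openin_product_euclidean_near)
  then have "openin ?P (\<Union>c\<in>{c. cmod c = 1}. {U. \<forall>u\<in>T. dist (U u) (cscale J c (V u)) < \<epsilon>})"
    by blast
  then have "openin (SOT_unitary J)
      (unitary_group J \<inter> (\<Union>c\<in>{c. cmod c = 1}. {U. \<forall>u\<in>T. dist (U u) (cscale J c (V u)) < \<epsilon>}))"
    unfolding SOT_unitary_def by (rule openin_subtopology_Int2)
  moreover have "unitary_group J \<inter> (\<Union>c\<in>{c. cmod c = 1}. {U. \<forall>u\<in>T. dist (U u) (cscale J c (V u)) < \<epsilon>})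
      = {U \<in> unitary_group J. \<exists>c. cmod c = 1 \<and> (\<forall>u\<in>T. dist (U u) (cscale J c (V u)) < \<epsilon>)}"
    by blast
  ultimately show ?thesis
    by simp
qed


lemma pclass_notin_closure_class_support_le:
  assumes V: "V \<in> unitary_group J"
    and Tn: "finite Tn" "orthonormal Tn" "\<forall>u\<in>Tn. V u = - u" "k < card Tn"
    and Tp: "finite Tp" "orthonormal Tp" "\<forall>u\<in>Tp. V u = u" "k < card Tp"
  shows "pclass J V \<notin> quotient_topology (SOT_unitary J) (pclass J) closure_of {A. class_support_le k A}"
proof -
  define \<epsilon> where "\<epsilon> = 1 / real (card Tn + card Tp)"
  have \<epsilon>: "\<epsilon> > 0" "real (card Tn + card Tp) * \<epsilon> = 1"
    using Tn(4) by (auto simp: \<epsilon>_def)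
  define N where "N = {U \<in> unitary_group J. \<exists>c. cmod c = 1 \<and> (\<forall>u\<in>Tn \<union> Tp. dist (U u) (cscale J c (V u)) < \<epsilon>)}"
  have saturated: "U \<in> N" if U': "U' \<in> N" and eq: "pclass J U = pclass J U'" for U U'
  proof -
    obtain d where d: "cmod d = 1" "U = (\<lambda>x. cscale J d (U' x))"
      using eq by (rule pclass_eqD)
    obtain c where c: "cmod c = 1" "\<forall>u\<in>Tn \<union> Tp. dist (U' u) (cscale J c (V u)) < \<epsilon>"
      using U' by (auto simp: N_def)
    have "U \<in> unitary_group J"
      using d comp_unitary[OF cscale_unitary[OF d(1)], of U'] U' by (simp add: N_def comp_def)
    moreover have "\<forall>u\<in>Tn \<union> Tp. dist (U u) (cscale J (d * c) (V u)) < \<epsilon>"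
      using c(2) dist_cscale[OF d(1)] by (simp add: d(2) flip: cscale_cscale)
    moreover have "cmod (d * c) = 1"
      using c(1) d(1) by (simp add: norm_mult)
    ultimately show ?thesis
      unfolding N_def by blast
  qed
  have "openin (SOT_unitary J) N"
    unfolding N_def using Tn(1) Tp(1) by (intro openin_SOT_unitary_near) simp
  then have "openin (quotient_topology (SOT_unitary J) (pclass J)) (pclass J ` N)"
    by (rule openin_quotient_topology_image) (rule saturated)
  moreover have "V \<in> N"
    unfolding N_def using V \<epsilon>(1) by (intro CollectI conjI exI[of _ 1]) simp_all
  then have "pclass J V \<in> pclass J ` N"
    by (rule imageI)
  moreover have "A \<notin> {A. class_support_le k A}" if A: "A \<in> pclass J ` N" for A
  proof
    assume "A \<in> {A. class_support_le k A}"
    then obtain W F where W: "W \<in> unitary_group J" "A = pclass J W" "fixes_orthogonal W F"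
      and F: "finite F" "card F \<le> k"
      by (auto simp: class_support_le_def)
    obtain U' where U': "U' \<in> N" "A = pclass J U'"
      using A by blast
    have "W \<in> N"
      using U'(2) W(2) by (intro saturated[OF U'(1)]) simp
    then obtain c where c: "\<forall>u\<in>Tn \<union> Tp. dist (W u) (cscale J c (V u)) < \<epsilon>"
      by (auto simp: N_def)
    have "\<forall>u\<in>Tn. norm (W u - cscale J (- c) u) \<le> \<epsilon>"
    proof
      fix u assume u: "u \<in> Tn"
      have "dist (W u) (cscale J c (V u)) < \<epsilon>"
        using c u by blast
      moreover have "cscale J c (V u) = cscale J (- c) u"
        using Tn(3) u by (simp add: cscale_def)
      ultimately show "norm (W u - cscale J (- c) u) \<le> \<epsilon>"
        by (simp add: dist_norm)
    qed
    then have "cmod (1 - - c) \<le> real (card Tn) * \<epsilon>"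
      using F Tn by (intro phase_close_to_one[OF Tn(1,2) W(1,3) F(1)]) auto
    moreover have "\<forall>u\<in>Tp. norm (W u - cscale J c u) \<le> \<epsilon>"
    proof
      fix u assume u: "u \<in> Tp"
      have "dist (W u) (cscale J c (V u)) < \<epsilon>"
        using c u by blast
      then show "norm (W u - cscale J c u) \<le> \<epsilon>"
        using Tp(3) u by (simp add: dist_norm)
    qed
    then have "cmod (1 - c) \<le> real (card Tp) * \<epsilon>"
      using F Tp by (intro phase_close_to_one[OF Tp(1,2) W(1,3) F(1)]) auto
    moreover have "2 \<le> cmod (1 - - c) + cmod (1 - c)"
      using norm_triangle_ineq[of "1 - - c" "1 - c"] by (simp add: algebra_simps)
    ultimately show False
      using \<epsilon>(2) by (simp add: distrib_right)
  qed
  ultimately show ?thesis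
    by (rule notin_closure_ofI)
qed

lemma exists_notin_closure_class_support_le:
  assumes "infinite_dimensional TYPE('h)"
  obtains A where "A \<in> carrier (projective_unitary_group J)"
    "A \<notin> quotient_topology (SOT_unitary J) (pclass J) closure_of {A. class_support_le k A}"
proof -
  obtain E where E: "finite E" "complex_orthonormal E" "card E = 2 * Suc k"
    using complex_orthonormal_exists[OF assms] .
  obtain Tn where Tn: "Tn \<subseteq> E" "card Tn = Suc k"
    using obtain_subset_with_card_n[of "Suc k" E] E(3) by auto
  define Tp where "Tp = E - Tn"
  have fin: "finite Tn" "finite Tp"
    using E(1) Tn(1) finite_subset by (auto simp: Tp_def)
  have "card Tp = Suc k"
    using E(3) Tn fin by (simp add: Tp_def card_Diff_subset)
  obtain V where V: "V \<in> unitary_group J" "\<forall>u\<in>Tn. V u = - u"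
    "\<forall>x. (\<forall>u\<in>Tn. inner x u = 0 \<and> inner x (J u) = 0) \<longrightarrow> V x = x"
    using exists_unitary_neg_on[OF fin(1) complex_orthonormal_subset[OF E(2) Tn(1)]] .
  have "V u = u" if "u \<in> Tp" for u
  proof -
    have "\<forall>t\<in>Tn. inner u t = 0 \<and> inner u (J t) = 0"
      using E(2) Tn(1) that unfolding complex_orthonormal_def Tp_def by fastforce
    then show ?thesis
      using V(3) by blast
  qed
  moreover have "orthonormal Tn" "orthonormal Tp"
    using E(2) Tn(1) complex_orthonormal_orthonormal complex_orthonormal_subset
    by (auto simp: Tp_def)
  ultimately have "pclass J V \<notin> quotient_topology (SOT_unitary J) (pclass J) closure_of {A. class_support_le k A}"
    using pclass_notin_closure_class_support_le[OF V(1) fin(1) _ V(2) _ fin(2)] Tn(2) \<open>card Tp = Suc k\<close>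
    by simp
  with V(1) show thesis
    by (intro that) auto
qed

theorem projective_unitary_group_not_top_bounded_normal_generation:
  assumes "infinite_dimensional TYPE('h)"
  shows "\<not> top_bounded_normal_generation (projective_unitary_group J)
           (quotient_topology (SOT_unitary J) (pclass J))"
proof -
  obtain E where E: "finite E" "complex_orthonormal E" "card E = 2"
    using complex_orthonormal_exists[OF assms] .
  then obtain v w where vw: "E = {v, w}" "v \<noteq> w"
    by (meson card_2_iff)
  then have v: "norm v = 1" and w: "w \<noteq> 0" "inner w v = 0" "inner w (J v) = 0"
    using E(2) by (auto simp: complex_orthonormal_def)
  show ?thesis
  proof (rule not_top_bounded_normal_generation_graded[where P = class_support_le and k = 2])
    show "pclass J (reflection v) \<in> carrier (projective_unitary_group J)"
      using reflection_unitary[OF v] by simp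
    show "pclass J (reflection v) \<noteq> \<one>\<^bsub>projective_unitary_group J\<^esub>"
      using pclass_reflection_ne_one[OF v w] by simp
    have "card {v, J v} \<le> 2"
      by (cases "v = J v") auto
    then show "class_support_le 2 c"
      if "c \<in> conj_pm (projective_unitary_group J) (pclass J (reflection v))" for c
      using class_support_le_conj_pm[OF reflection_unitary[OF v] fixes_orthogonal_reflection _ _ that]
      by simp
    show "\<exists>x\<in>carrier (projective_unitary_group J).
        x \<notin> quotient_topology (SOT_unitary J) (pclass J) closure_of {a. class_support_le i a}" for i
      using exists_notin_closure_class_support_le[OF assms, of i] by blast
  qed (use class_support_le_one class_support_le_mult in auto)
qed

end

theorem mainTheorem7:
  fixes X :: "'a set" and J :: "'h::{real_inner,complete_space} \<Rightarrow> 'h"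
  shows "(infinite X \<longrightarrow>
            \<not> top_bounded_normal_generation (BijGroup X) (pointwise_top X))
       \<and> (complex_structure J \<and> infinite_dimensional TYPE('h) \<longrightarrow>
            \<not> top_bounded_normal_generation (projective_unitary_group J)
                 (quotient_topology (SOT_unitary J) (pclass J)))"
  using BijGroup_not_top_bounded_normal_generation[of X]
    complex_hilbert_space.projective_unitary_group_not_top_bounded_normal_generation[of J]
  by (auto simp: complex_hilbert_space_def complex_inner_space_def)

end
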